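(* Let $e\ge3$, let $A$ be an arm sequence and $n\in\mathbb N$, and let $y=\max\{A_t/t: t\in\{1,\dots,n\}\}$. Then $A_t=\lfloor yt\rfloor$ for $t=1,\dots,n$. Consequently $\mathcal R_A^{(n)}=\mathcal R_{A^{y+}}^{(n)}$.
   Context: An arm sequence is an integer sequence $A=(A_1,A_2,\dots)$ with $t-1\le A_t\le(e-1)t$ and $A_{t+u}\in\{A_t+A_u,A_t+A_u+1\}$ for all $t,u\ge1$. For real $y\in[1,e-1]$, $A^{y+}$ is the arm sequence $A^{y+}_t=\lfloor yt\rfloor$. $\mathcal R_A$ is the crystal whose vertices are the $A$-regular partitions (no hook of length $et$ and arm length $A_t$ for any $t\ge1$) with arrows $\lambda\xrightarrow{i}f_i\lambda$ defined by the $A$-dependent $i$-signature rule (for distinct $i$-nodes $(r,c),(s,d)$ with $s-r+c-d=et$, $t\ge0$ after swapping, $(r,c)\prec(s,d)$ iff $c-d\le A_t$, $A_0:=0$; addable/removable $i$-nodes in decreasing order give a $\pm$ word, adjacent $+-$ cancelled; $f_i$ adds the node of the first remaining $+$). $\mathcal R_A^{(n)}$ denotes the induced subgraph on partitions of size at most $ne$. *)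

theory Defs
  imports Main "HOL-Library.Multiset" Complex_Main
begin

text \<open>Sequences are functions on nat; the value at index 0 is ignored
  (indices t range over positive integers).\<close>

definition arm_seq :: "nat \<Rightarrow> (nat \<Rightarrow> int) \<Rightarrow> bool" where
  "arm_seq e A \<longleftrightarrow>
     (\<forall>t\<ge>1. int t - 1 \<le> A t \<and> A t \<le> (int e - 1) * int t) \<and>
     (\<forall>t u. t \<ge> 1 \<longrightarrow> u \<ge> 1 \<longrightarrow>
        A (t + u) = A t + A u \<or> A (t + u) = A t + A u + 1)"

text \<open>The sequence A^{y+}: t maps to floor(y t).\<close>
definition arm_floor :: "real \<Rightarrow> nat \<Rightarrow> int" where
  "arm_floor y t = \<lfloor>y * real t\<rfloor>"

definition Aext :: "(nat \<Rightarrow> int) \<Rightarrow> nat \<Rightarrow> int" where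
  "Aext A t = (if t = 0 then 0 else A t)"

definition young :: "(nat \<times> nat) set \<Rightarrow> bool" where
  "young D \<longleftrightarrow> finite D \<and>
     (\<forall>r c. (r, c) \<in> D \<longrightarrow> 1 \<le> r \<and> 1 \<le> c \<and>
        (\<forall>r' c'. 1 \<le> r' \<longrightarrow> r' \<le> r \<longrightarrow> 1 \<le> c' \<longrightarrow> c' \<le> c \<longrightarrow> (r', c') \<in> D))"

definition arm_len :: "(nat \<times> nat) set \<Rightarrow> nat \<times> nat \<Rightarrow> nat" where
  "arm_len D x = card {c'. (fst x, c') \<in> D \<and> c' > snd x}"

definition leg_len :: "(nat \<times> nat) set \<Rightarrow> nat \<times> nat \<Rightarrow> nat" where
  "leg_len D x = card {r'. (r', snd x) \<in> D \<and> r' > fst x}"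

definition hook_len :: "(nat \<times> nat) set \<Rightarrow> nat \<times> nat \<Rightarrow> nat" where
  "hook_len D x = arm_len D x + leg_len D x + 1"

definition regular :: "nat \<Rightarrow> (nat \<Rightarrow> int) \<Rightarrow> (nat \<times> nat) set \<Rightarrow> bool" where
  "regular e A D \<longleftrightarrow>
     (\<forall>x\<in>D. \<forall>t\<ge>1. \<not> (hook_len D x = e * t \<and> int (arm_len D x) = A t))"

definition addable :: "(nat \<times> nat) set \<Rightarrow> nat \<times> nat \<Rightarrow> bool" where
  "addable D x \<longleftrightarrow> x \<notin> D \<and> young (insert x D)"

definition removable :: "(nat \<times> nat) set \<Rightarrow> nat \<times> nat \<Rightarrow> bool" where
  "removable D x \<longleftrightarrow> x \<in> D \<and> young (D - {x})"

definition residue :: "nat \<Rightarrow> nat \<times> nat \<Rightarrow> int" where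
  "residue e x = (int (snd x) - int (fst x)) mod int e"

definition inodes :: "nat \<Rightarrow> (nat \<times> nat) set \<Rightarrow> nat \<Rightarrow> (nat \<times> nat) set" where
  "inodes e D i = {x. (addable D x \<or> removable D x) \<and> residue e x = int i}"

text \<open>For distinct i-nodes (r,c), (s,d) put k = s - r + c - d (a multiple of e).\<close>
definition prec :: "nat \<Rightarrow> (nat \<Rightarrow> int) \<Rightarrow> nat \<times> nat \<Rightarrow> nat \<times> nat \<Rightarrow> bool" where
  "prec e A x y \<longleftrightarrow> x \<noteq> y \<and>
     (let r = int (fst x); c = int (snd x); s = int (fst y); d = int (snd y);
          k = s - r + c - d
      in if k \<ge> 0 then c - d \<le> Aext A (nat (k div int e))
         else \<not> (d - c \<le> Aext A (nat ((- k) div int e))))"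

text \<open>A signed word: each entry is a node together with True (+, addable)
  or False (-, removable).\<close>
definition cancel1 :: "((nat \<times> nat) \<times> bool) list \<Rightarrow> ((nat \<times> nat) \<times> bool) list \<Rightarrow> bool" where
  "cancel1 w w' \<longleftrightarrow> (\<exists>u a b v. w = u @ [a, b] @ v \<and> snd a \<and> \<not> snd b \<and> w' = u @ v)"

definition reduced_word :: "((nat \<times> nat) \<times> bool) list \<Rightarrow> bool" where
  "reduced_word w \<longleftrightarrow> \<not> (\<exists>w'. cancel1 w w')"

definition sig_list :: "nat \<Rightarrow> (nat \<Rightarrow> int) \<Rightarrow> (nat \<times> nat) set \<Rightarrow> nat \<Rightarrow> (nat \<times> nat) list \<Rightarrow> bool" where
  "sig_list e A D i L \<longleftrightarrow> distinct L \<and> set L = inodes e D i \<and>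
     sorted_wrt (\<lambda>x y. prec e A y x) L"

text \<open>f_i D = D' : D' is D with the node of the first remaining + added.\<close>
definition crystal_arrow :: "nat \<Rightarrow> (nat \<Rightarrow> int) \<Rightarrow> (nat \<times> nat) set \<Rightarrow> nat \<Rightarrow> (nat \<times> nat) set \<Rightarrow> bool" where
  "crystal_arrow e A D i D' \<longleftrightarrow> i < e \<and>
     (\<exists>L w. sig_list e A D i L \<and>
        cancel1\<^sup>*\<^sup>* (map (\<lambda>x. (x, addable D x)) L) w \<and> reduced_word w \<and>
        (\<exists>u x v. w = u @ [(x, True)] @ v \<and> (\<forall>a\<in>set u. \<not> snd a) \<and> D' = insert x D))"

section \<open>The truncated crystal R_A^(n): induced subgraph on partitions of size <= n e\<close>

definition crystal_trunc :: "nat \<Rightarrow> (nat \<Rightarrow> int) \<Rightarrow> nat \<Rightarrow>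
    ((nat \<times> nat) set set \<times> ((nat \<times> nat) set \<times> nat \<times> (nat \<times> nat) set) set)" where
  "crystal_trunc e A n =
     (let V = {D. young D \<and> regular e A D \<and> card D \<le> n * e}
      in (V, {(D, i, D'). D \<in> V \<and> D' \<in> V \<and> crystal_arrow e A D i D'}))"

end

theory Submission
  imports Defs
begin

(* The arm axioms give k A_s \<le> A_(k s) \<le> k (A_s + 1) - 1 by induction on k; evaluating A_(s t)
   from both sides yields t A_s < s (A_t + 1). For the maximal ratio y = A_s/s this says
   A_t/t \<le> y < (A_t + 1)/t, i.e. A_t = \<lfloor>y t\<rfloor>.

   The truncated crystal only sees A_1, ..., A_n: in a partition of size at most n e every hook
   has length at most n e, and any two addable or removable nodes (r,c), (s,d) satisfy
   |s - r + c - d| \<le> |D| + 1 < (n + 1) e, because the first row and column up to those nodes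
   lie in the diagram. So regularity and the order \<prec> only consult A_t with t \<le> n. *)

lemma arm_seq_add_bounds:
  assumes "arm_seq e A" "t \<ge> 1" "u \<ge> 1"
  shows "A t + A u \<le> A (t + u)" "A (t + u) \<le> A t + A u + 1"
  using assms unfolding arm_seq_def by fastforce+

lemma arm_seq_mult_bounds:
  assumes "arm_seq e A" "s \<ge> 1" "k \<ge> 1"
  shows "int k * A s \<le> A (k * s) \<and> A (k * s) + 1 \<le> int k * (A s + 1)"
  using \<open>k \<ge> 1\<close>
proof (induction k rule: nat_induct_at_least)
  case (Suc k)
  have "k * s \<ge> 1" using Suc.hyps assms(2) by simp
  show ?case
    using Suc.IH arm_seq_add_bounds[OF assms(1) assms(2) \<open>k * s \<ge> 1\<close>] by (simp add: ring_distribs)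
qed simp

lemma arm_seq_cross_less:
  assumes "arm_seq e A" "s \<ge> 1" "t \<ge> 1"
  shows "int t * A s < int s * (A t + 1)"
  using arm_seq_mult_bounds[OF assms(1,2,3)] arm_seq_mult_bounds[OF assms(1,3,2)]
  by (simp add: mult.commute)

lemma arm_seq_eq_floor_ratio:
  assumes "arm_seq e A" "s \<ge> 1" "t \<ge> 1"
    and "A t / real t \<le> A s / real s"
  shows "A t = \<lfloor>A s / real s * real t\<rfloor>"
proof (rule floor_unique[symmetric])
  show "real_of_int (A t) \<le> A s / real s * real t"
    using assms(3,4) by (simp add: field_simps)
  have "real_of_int (int t * A s) < real_of_int (int s * (A t + 1))"
    using arm_seq_cross_less[OF assms(1-3)] by (simp only: of_int_less_iff)
  then have "real t * A s < real s * (A t + 1)" by simp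
  then show "A s / real s * real t < real_of_int (A t) + 1"
    using assms(2) by (simp add: field_simps)
qed

lemma arm_seq_eq_floor_Max_ratio:
  assumes "arm_seq e A" "t \<in> {1..n}"
  shows "A t = \<lfloor>Max ((\<lambda>t. A t / real t) ` {1..n}) * real t\<rfloor>"
proof -
  let ?R = "(\<lambda>t. A t / real t) ` {1..n}"
  obtain s where s: "s \<in> {1..n}" "Max ?R = A s / real s"
    using Max_in[of ?R] assms(2) by fastforce
  have "A t / real t \<le> Max ?R" using assms(2) by simp
  then show ?thesis
    unfolding s(2) by (intro arm_seq_eq_floor_ratio[OF assms(1)]) (use s(1) assms(2) in auto)
qed

definition corner_node :: "(nat \<times> nat) set \<Rightarrow> nat \<times> nat \<Rightarrow> bool" where
  "corner_node D x \<longleftrightarrow> fst x \<ge> 1 \<and> snd x \<ge> 1 \<and> {1..fst x} \<times> {1..snd x} - {x} \<subseteq> D"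

lemma young_rectangle_subset:
  assumes "young D" "(r, c) \<in> D"
  shows "1 \<le> r" "1 \<le> c" "{1..r} \<times> {1..c} \<subseteq> D"
proof -
  have "1 \<le> r \<and> 1 \<le> c \<and> (\<forall>r' c'. 1 \<le> r' \<longrightarrow> r' \<le> r \<longrightarrow> 1 \<le> c' \<longrightarrow> c' \<le> c \<longrightarrow> (r', c') \<in> D)"
    using assms unfolding young_def by blast
  then show "1 \<le> r" "1 \<le> c" "{1..r} \<times> {1..c} \<subseteq> D" by auto
qed

lemma addable_corner_node:
  assumes "addable D x" shows "corner_node D x"
proof -
  obtain r c where x: "x = (r, c)" by (cases x)
  have "young (insert x D)" using assms unfolding addable_def by blast
  from young_rectangle_subset[OF this, of r c] show ?thesis
    unfolding corner_node_def x by auto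
qed

lemma removable_corner_node:
  assumes "young D" "removable D x" shows "corner_node D x"
proof -
  obtain r c where x: "x = (r, c)" by (cases x)
  have "x \<in> D" using assms(2) unfolding removable_def by blast
  from young_rectangle_subset[OF assms(1), of r c] this show ?thesis
    unfolding corner_node_def x by auto
qed

lemma hook_len_le_card:
  assumes "young D" "x \<in> D"
  shows "hook_len D x \<le> card D"
proof -
  obtain r c where x: "x = (r, c)" by (cases x)
  define arm where "arm = {c'. (r, c') \<in> D \<and> c' > c}"
  define leg where "leg = {r'. (r', c) \<in> D \<and> r' > r}"
  have fin: "finite D" using assms(1) unfolding young_def by blast
  have "arm \<subseteq> snd ` D" "leg \<subseteq> fst ` D"
    unfolding arm_def leg_def by force+
  then have "finite arm" "finite leg"
    using fin by (auto intro: finite_subset)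
  have "insert x (Pair r ` arm \<union> (\<lambda>r'. (r', c)) ` leg) \<subseteq> D"
    using assms(2) unfolding x arm_def leg_def by auto
  then have "card (insert x (Pair r ` arm \<union> (\<lambda>r'. (r', c)) ` leg)) \<le> card D"
    by (rule card_mono[OF fin])
  moreover have "card (insert x (Pair r ` arm \<union> (\<lambda>r'. (r', c)) ` leg)) = card arm + card leg + 1"
  proof -
    have "Pair r ` arm \<inter> (\<lambda>r'. (r', c)) ` leg = {}" "x \<notin> Pair r ` arm \<union> (\<lambda>r'. (r', c)) ` leg"
      unfolding x arm_def leg_def by auto
    with \<open>finite arm\<close> \<open>finite leg\<close> show ?thesis
      by (simp add: card_Un_disjoint card_image inj_on_def)
  qed
  ultimately show ?thesis
    unfolding hook_len_def arm_len_def leg_len_def x arm_def leg_def by simp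
qed

lemma corner_nodes_content_diff_le:
  assumes "young D" "corner_node D (r, c)" "corner_node D (s, d)"
  shows "\<bar>int s - int r + int c - int d\<bar> \<le> int (card D) + 1"
proof -
  define M where "M = max c d"
  define N where "N = max r s"
  have ge: "r \<ge> 1" "c \<ge> 1" "s \<ge> 1" "d \<ge> 1" using assms(2,3) unfolding corner_node_def by auto
  define H where "H = {1} \<times> {1..M} \<union> {1..N} \<times> {1}"
  have "card H + 1 = M + N"
    using card_Un_Int[of "{1::nat} \<times> {1..M}" "{1..N} \<times> {1::nat}"] ge
    unfolding H_def M_def N_def by (auto simp: card_cartesian_product Times_Int_Times)
  have "H \<subseteq> {1..r} \<times> {1..c} \<union> {1..s} \<times> {1..d}"
    using ge unfolding H_def M_def N_def by (auto simp: max_def split: if_splits)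
  then have "H - {(r, c), (s, d)} \<subseteq> D"
    using assms(2,3) unfolding corner_node_def by auto
  then have "card (H - {(r, c), (s, d)}) \<le> card D"
    using assms(1) unfolding young_def by (simp add: card_mono)
  moreover have "card {(r, c), (s, d)} \<le> 2"
    by (simp add: card_insert_if)
  then have "card H - 2 \<le> card (H - {(r, c), (s, d)})"
    using diff_card_le_card_Diff[of "{(r, c), (s, d)}" H] by simp
  ultimately have "card H \<le> card D + 2" by linarith
  moreover have "c \<le> M" "d \<le> M" "r \<le> N" "s \<le> N"
    unfolding M_def N_def by simp_all
  ultimately show ?thesis
    using \<open>card H + 1 = M + N\<close> ge by (simp add: abs_le_iff)
qed

lemma nat_div_le_if_le_mult_plus_1:
  fixes k :: int
  assumes "e \<ge> 2" "k \<le> int (n * e) + 1"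
  shows "nat (k div int e) \<le> n"
proof -
  have "k div int e * int e \<le> k"
    using pos_mod_sign[of "int e" k] assms(1) by (simp add: minus_mod_eq_div_mult[symmetric])
  also have "k < int (Suc n) * int e" using assms by (simp add: distrib_right)
  finally show ?thesis using mult_less_cancel_right_pos[of "int e"] assms(1) by fastforce
qed

lemma Aext_cong:
  "\<forall>t\<in>{1..n}. A t = B t \<Longrightarrow> t \<le> n \<Longrightarrow> Aext A t = Aext B t"
  unfolding Aext_def by simp

lemma prec_cong:
  assumes agree: "\<forall>t\<in>{1..n}. A t = B t" and "e \<ge> 2" "young D" "card D \<le> n * e"
    and "corner_node D x" "corner_node D y"
  shows "prec e A x y = prec e B x y"
proof -
  obtain r c s d where xy: "x = (r, c)" "y = (s, d)" by (cases x, cases y)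
  define k where "k = int s - int r + int c - int d"
  have "\<bar>k\<bar> \<le> int (n * e) + 1"
    using corner_nodes_content_diff_le[OF assms(3), of r c s d] assms(4-6)
    unfolding k_def xy by linarith
  then have "nat (k div int e) \<le> n" "nat (- k div int e) \<le> n"
    using nat_div_le_if_le_mult_plus_1[OF \<open>e \<ge> 2\<close>] by (simp_all add: abs_le_iff)
  then show ?thesis
    unfolding prec_def Let_def xy fst_conv snd_conv k_def[symmetric]
    using Aext_cong[OF agree] by simp
qed

lemma regular_cong:
  assumes agree: "\<forall>t\<in>{1..n}. A t = B t" and "e \<ge> 1" "young D" "card D \<le> n * e"
  shows "regular e A D = regular e B D"
proof -
  have "A t = B t" if "x \<in> D" "t \<ge> 1" "hook_len D x = e * t" for x t
  proof -
    have "e * t \<le> n * e"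
      using hook_len_le_card[OF assms(3) that(1)] that(3) assms(4) by linarith
    then have "t \<le> n" using \<open>e \<ge> 1\<close> by (simp add: mult.commute[of n])
    then show ?thesis using agree that(2) by simp
  qed
  then show ?thesis unfolding regular_def by metis
qed

lemma sorted_wrt_cong:
  "(\<And>x y. x \<in> set L \<Longrightarrow> y \<in> set L \<Longrightarrow> P x y = Q x y) \<Longrightarrow> sorted_wrt P L = sorted_wrt Q L"
  by (induction L) auto

lemma sig_list_cong:
  assumes agree: "\<forall>t\<in>{1..n}. A t = B t" and "e \<ge> 2" "young D" "card D \<le> n * e"
  shows "sig_list e A D i L = sig_list e B D i L"
proof -
  have "corner_node D x" if "x \<in> inodes e D i" for x
    using that addable_corner_node removable_corner_node[OF assms(3)] unfolding inodes_def by blast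
  then have "sorted_wrt (\<lambda>x y. prec e A y x) L = sorted_wrt (\<lambda>x y. prec e B y x) L"
    if "set L = inodes e D i"
    using that prec_cong[OF assms] by (intro sorted_wrt_cong) simp
  then show ?thesis unfolding sig_list_def by blast
qed

lemma crystal_trunc_cong:
  assumes "\<forall>t\<in>{1..n}. A t = B t" "e \<ge> 2"
  shows "crystal_trunc e A n = crystal_trunc e B n"
proof -
  have "regular e A D = regular e B D" "crystal_arrow e A D i D' = crystal_arrow e B D i D'"
    if "young D" "card D \<le> n * e" for D i D'
    using regular_cong[OF assms(1) _ that] sig_list_cong[OF assms that] \<open>e \<ge> 2\<close>
    unfolding crystal_arrow_def by simp_all
  then show ?thesis unfolding crystal_trunc_def Let_def by (auto cong: conj_cong)
qed

theorem mainTheorem9: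
  fixes e n :: nat and A :: "nat \<Rightarrow> int" and y :: real
  assumes "e \<ge> 3"
    and "arm_seq e A"
    and "y = Max ((\<lambda>t. real_of_int (A t) / real t) ` {1..n})"
  shows "(\<forall>t\<in>{1..n}. A t = \<lfloor>y * real t\<rfloor>) \<and>
         crystal_trunc e A n = crystal_trunc e (arm_floor y) n"
proof
  show "\<forall>t\<in>{1..n}. A t = \<lfloor>y * real t\<rfloor>"
    using arm_seq_eq_floor_Max_ratio[OF assms(2)] assms(3) by simp
  then have "\<forall>t\<in>{1..n}. A t = arm_floor y t"
    unfolding arm_floor_def by simp
  with assms(1) show "crystal_trunc e A n = crystal_trunc e (arm_floor y) n"
    by (intro crystal_trunc_cong) simp_all
qed

end
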